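(* Let $\Lambda\subset\mathbb B_d$ be an interpolating sequence. Then $\{w\}\cup\Lambda$ is also an interpolating sequence for every $w\in\mathbb B_d$.
   Context: $\mathbb B_d$ is the open unit ball of $\mathbb C^d$; $\mathcal M_d$ is the multiplier algebra of the Drury–Arveson space $H^2_d$ (the reproducing kernel Hilbert space on $\mathbb B_d$ with kernel $(1-\langle z,w\rangle)^{-1}$). A countable set $\Lambda\subset\mathbb B_d$ is an interpolating sequence if for every bounded function $a$ on $\Lambda$ there is $\psi\in\mathcal M_d$ with $\psi(\lambda)=a(\lambda)$ for all $\lambda\in\Lambda$. *)

theory Defs
  imports "HOL-Analysis.Analysis"
begin

text \<open>Points of complex d-space are vectors of type complex^'d; the dimension d is
  CARD('d).  The open unit ball B_d is ball 0 1 (Euclidean norm).\<close>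

definition da_inner :: "complex^'d \<Rightarrow> complex^'d \<Rightarrow> complex" where
  "da_inner z w = (\<Sum>i\<in>UNIV. z $ i * cnj (w $ i))"

definition da_kernel :: "complex^'d \<Rightarrow> complex^'d \<Rightarrow> complex" where
  "da_kernel z w = 1 / (1 - da_inner z w)"

text \<open>Membership in the reproducing kernel Hilbert space H^2_d with kernel da_kernel
  (Aronszajn / Moore): f belongs to H(K) iff the functional
  sum_i a_i k_{z_i} |-> sum_i cnj(a_i) f(z_i) on the span of kernel functions is bounded,
  i.e. |sum_i cnj(a_i) f(z_i)|^2 <= c * || sum_i a_i k_{z_i} ||^2 for some constant c.
  Only the values of f on the ball matter.\<close>
definition in_H2 :: "(complex^'d \<Rightarrow> complex) \<Rightarrow> bool" where
  "in_H2 f \<longleftrightarrow> (\<exists>c::real. \<forall>(n::nat) (z::nat \<Rightarrow> complex^'d) (a::nat \<Rightarrow> complex).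
      (\<forall>i<n. z i \<in> ball 0 1) \<longrightarrow>
      (cmod (\<Sum>i<n. cnj (a i) * f (z i)))\<^sup>2
        \<le> c * Re (\<Sum>i<n. \<Sum>j<n. a i * cnj (a j) * da_kernel (z j) (z i)))"

definition is_multiplier :: "(complex^'d \<Rightarrow> complex) \<Rightarrow> bool" where
  "is_multiplier \<phi> \<longleftrightarrow> (\<forall>f. in_H2 f \<longrightarrow> in_H2 (\<lambda>z. \<phi> z * f z))"

definition interpolating_seq :: "(complex^'d) set \<Rightarrow> bool" where
  "interpolating_seq \<Lambda> \<longleftrightarrow> countable \<Lambda> \<and> \<Lambda> \<subseteq> ball 0 1 \<and>
     (\<forall>a::complex^'d \<Rightarrow> complex. bounded (a ` \<Lambda>) \<longrightarrow>
        (\<exists>\<psi>. is_multiplier \<psi> \<and> (\<forall>x\<in>\<Lambda>. \<psi> x = a x)))"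

end

theory Submission
  imports Defs
begin

(* Since |<z,w>| < 1 on the ball, the kernel form sum_{i,j} a_i cnj(a_j) K(z_j,z_i) is the sum
   over m of the forms with kernel <z_j,z_i>^m, each of them positive, and replacing a_i by
   a_i cnj(z_i$k) turns the m-th form into one summand of the (m+1)-st.  So the coefficients
   a_i cnj(z_i$k) give a smaller kernel form: the coordinate functions are multipliers, and hence
   so are all polynomials.  Functions in H^2_d are continuous on the ball, so an interpolating set
   has no limit point w there: a multiplier alternating between 0 and 1 along a sequence in the
   set converging to w would be discontinuous at w.  Hence Lambda keeps a positive distance from
   w, the bounded data cnj(x$k - w$k) / |x - w|^2 are interpolated by multipliers h_k, and
   phi = 1 - sum_k (x$k - w$k) h_k is a multiplier with phi w = 1 and phi = 0 on Lambda.  Adding a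
   multiple of phi to an interpolant on Lambda corrects its value at w. *)

lemma norm_da_inner_le: "cmod (da_inner z w) \<le> norm z * norm w"
proof -
  have "cmod (da_inner z w) \<le> (\<Sum>i\<in>UNIV. cmod (z $ i) * cmod (w $ i))"
    unfolding da_inner_def by (rule order_trans[OF norm_sum]) (simp add: norm_mult)
  also have "\<dots> = (\<Sum>i\<in>UNIV. \<bar>cmod (z $ i)\<bar> * \<bar>cmod (w $ i)\<bar>)" by simp
  also have "\<dots> \<le> norm z * norm w" unfolding norm_vec_def by (rule L2_set_mult_ineq)
  finally show ?thesis .
qed

lemma norm_da_inner_less_1: "z \<in> ball 0 1 \<Longrightarrow> w \<in> ball 0 1 \<Longrightarrow> cmod (da_inner z w) < 1"
  by (rule le_less_trans[OF norm_da_inner_le]) (use mult_strict_mono[of "norm z" 1 "norm w" 1] in simp)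

definition kernel_form :: "nat \<Rightarrow> (nat \<Rightarrow> complex^'d) \<Rightarrow> (nat \<Rightarrow> complex) \<Rightarrow> complex" where
  "kernel_form n z a = (\<Sum>i<n. \<Sum>j<n. a i * cnj (a j) * da_kernel (z j) (z i))"

definition power_form :: "nat \<Rightarrow> (nat \<Rightarrow> complex^'d) \<Rightarrow> nat \<Rightarrow> (nat \<Rightarrow> complex) \<Rightarrow> complex" where
  "power_form n z m a = (\<Sum>i<n. \<Sum>j<n. a i * cnj (a j) * da_inner (z j) (z i) ^ m)"

lemma in_H2_iff_kernel_form:
  "in_H2 f \<longleftrightarrow> (\<exists>c. \<forall>n z a. (\<forall>i<n. z i \<in> ball 0 1) \<longrightarrow>
      (cmod (\<Sum>i<n. cnj (a i) * f (z i)))\<^sup>2 \<le> c * Re (kernel_form n z a))"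
  unfolding in_H2_def kernel_form_def ..

lemma in_H2I:
  assumes "\<And>n z a. \<forall>i<n. z i \<in> ball 0 1 \<Longrightarrow>
      (cmod (\<Sum>i<n. cnj (a i) * f (z i)))\<^sup>2 \<le> c * Re (kernel_form n z a)"
  shows "in_H2 f"
  unfolding in_H2_iff_kernel_form using assms by blast

lemma in_H2E:
  assumes "in_H2 f"
  obtains c where "\<And>n z a. \<forall>i<n. z i \<in> ball 0 1 \<Longrightarrow>
      (cmod (\<Sum>i<n. cnj (a i) * f (z i)))\<^sup>2 \<le> c * Re (kernel_form n z a)"
proof -
  from assms obtain c where "\<forall>n z a. (\<forall>i<n. z i \<in> ball 0 1) \<longrightarrow>
      (cmod (\<Sum>i<n. cnj (a i) * f (z i)))\<^sup>2 \<le> c * Re (kernel_form n z a)"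
    unfolding in_H2_iff_kernel_form by blast
  then show thesis by (intro that) blast
qed

lemma power_form_0: "power_form n z 0 a = of_real ((cmod (\<Sum>i<n. a i))\<^sup>2)"
  unfolding power_form_def complex_norm_square
  by (simp add: sum_distrib_left sum_distrib_right, rule sum.swap)

lemma power_form_Suc:
  "power_form n z (Suc m) a = (\<Sum>l\<in>UNIV. power_form n z m (\<lambda>i. a i * cnj (z i $ l)))"
proof -
  let ?t = "\<lambda>i j l. a i * cnj (z i $ l) * cnj (a j * cnj (z j $ l)) * da_inner (z j) (z i) ^ m"
  have "power_form n z (Suc m) a = (\<Sum>i<n. \<Sum>j<n. \<Sum>l\<in>UNIV. ?t i j l)"
    unfolding power_form_def by (intro sum.cong refl)
      (simp add: power_Suc da_inner_def[of "z _" "z _"] sum_distrib_left sum_distrib_right mult_ac)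
  also have "\<dots> = (\<Sum>l\<in>UNIV. \<Sum>i<n. \<Sum>j<n. ?t i j l)"
    by (subst sum.swap) (simp add: sum.swap[of _ "{..<n}" UNIV])
  finally show ?thesis unfolding power_form_def .
qed

lemma Re_power_form_nonneg: "0 \<le> Re (power_form n z m a)"
proof (induction m arbitrary: a)
  case 0 then show ?case by (simp add: power_form_0)
next
  case (Suc m) then show ?case by (simp add: power_form_Suc sum_nonneg)
qed

lemma Re_power_form_sums:
  assumes "\<forall>i<n. z i \<in> ball 0 1"
  shows "(\<lambda>m. Re (power_form n z m a)) sums Re (kernel_form n z a)"
proof (rule sums_Re)
  show "(\<lambda>m. power_form n z m a) sums kernel_form n z a"
    unfolding power_form_def kernel_form_def
  proof (intro sums_sum sums_mult)
    fix i j assume "i \<in> {..<n}" "j \<in> {..<n}"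
    then have "cmod (da_inner (z j) (z i)) < 1" using assms norm_da_inner_less_1 by auto
    then show "(\<lambda>m. da_inner (z j) (z i) ^ m) sums da_kernel (z j) (z i)"
      unfolding da_kernel_def by (rule geometric_sums)
  qed
qed

lemma kernel_form_ge_sum_square:
  assumes "\<forall>i<n. z i \<in> ball 0 1"
  shows "(cmod (\<Sum>i<n. a i))\<^sup>2 \<le> Re (kernel_form n z a)"
proof -
  have "Re (power_form n z 0 a) \<le> Re (kernel_form n z a)"
    by (rule sums_le[OF _ sums_single[of 0] Re_power_form_sums[OF assms]])
      (simp add: Re_power_form_nonneg)
  then show ?thesis by (simp add: power_form_0)
qed

lemma Re_kernel_form_nonneg: "\<forall>i<n. z i \<in> ball 0 1 \<Longrightarrow> 0 \<le> Re (kernel_form n z a)"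
  using kernel_form_ge_sum_square by (meson order_trans zero_le_power2)

lemma kernel_form_coordinate_le:
  assumes "\<forall>i<n. z i \<in> ball 0 1"
  shows "Re (kernel_form n z (\<lambda>i. a i * cnj (z i $ k))) \<le> Re (kernel_form n z a)"
proof -
  let ?b = "\<lambda>i. a i * cnj (z i $ k)"
  have shifted: "(\<lambda>m. Re (power_form n z (Suc m) a)) sums (Re (kernel_form n z a) - Re (power_form n z 0 a))"
    using sums_Suc_iff[of "\<lambda>m. Re (power_form n z m a)"] Re_power_form_sums[OF assms] by simp
  have "Re (power_form n z m ?b) \<le> Re (power_form n z (Suc m) a)" for m
    unfolding power_form_Suc Re_sum by (rule member_le_sum) (auto simp: Re_power_form_nonneg)
  then have "Re (kernel_form n z ?b) \<le> Re (kernel_form n z a) - Re (power_form n z 0 a)"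
    by (rule sums_le[OF _ Re_power_form_sums[OF assms] shifted])
  then show ?thesis using Re_power_form_nonneg[of n z 0 a] by linarith
qed

lemma in_H2_const: "in_H2 (\<lambda>x::complex^'d. 1)"
proof (rule in_H2I[where c = 1])
  fix n and z :: "nat \<Rightarrow> complex^'d" and a
  assume z: "\<forall>i<n. z i \<in> ball 0 1"
  have "(\<Sum>i<n. cnj (a i) * 1) = cnj (\<Sum>i<n. a i)"
    by (simp add: cnj_sum)
  then have "cmod (\<Sum>i<n. cnj (a i) * 1) = cmod (\<Sum>i<n. a i)"
    by (simp only: complex_mod_cnj)
  then show "(cmod (\<Sum>i<n. cnj (a i) * 1))\<^sup>2 \<le> 1 * Re (kernel_form n z a)"
    using kernel_form_ge_sum_square[OF z, of a] by simp
qed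

lemma in_H2_coordinate_mult:
  fixes f :: "complex^'d \<Rightarrow> complex"
  assumes "in_H2 f"
  shows "in_H2 (\<lambda>x. x $ k * f x)"
proof -
  obtain c where c: "\<And>n z a. \<forall>i<n. z i \<in> ball 0 1 \<Longrightarrow>
      (cmod (\<Sum>i<n. cnj (a i) * f (z i)))\<^sup>2 \<le> c * Re (kernel_form n z a)"
    using in_H2E[OF assms] by blast
  show ?thesis
  proof (rule in_H2I[where c = "max c 0"])
    fix n and z :: "nat \<Rightarrow> complex^'d" and a assume z: "\<forall>i<n. z i \<in> ball 0 1"
    let ?b = "\<lambda>i. a i * cnj (z i $ k)"
    have "(\<Sum>i<n. cnj (a i) * (z i $ k * f (z i))) = (\<Sum>i<n. cnj (?b i) * f (z i))"
      by (simp add: mult.assoc)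
    then have "(cmod (\<Sum>i<n. cnj (a i) * (z i $ k * f (z i))))\<^sup>2 \<le> c * Re (kernel_form n z ?b)"
      using c[OF z, of ?b] by simp
    also have "\<dots> \<le> max c 0 * Re (kernel_form n z ?b)"
      by (rule mult_right_mono) (auto simp: Re_kernel_form_nonneg[OF z])
    also have "\<dots> \<le> max c 0 * Re (kernel_form n z a)"
      by (rule mult_left_mono) (auto simp: kernel_form_coordinate_le[OF z])
    finally show "(cmod (\<Sum>i<n. cnj (a i) * (z i $ k * f (z i))))\<^sup>2 \<le> max c 0 * Re (kernel_form n z a)" .
  qed
qed

lemma in_H2_add:
  fixes f g :: "complex^'d \<Rightarrow> complex"
  assumes "in_H2 f" "in_H2 g"
  shows "in_H2 (\<lambda>x. f x + g x)"
proof -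
  obtain c where c: "\<And>n z a. \<forall>i<n. z i \<in> ball 0 1 \<Longrightarrow>
      (cmod (\<Sum>i<n. cnj (a i) * f (z i)))\<^sup>2 \<le> c * Re (kernel_form n z a)"
    using in_H2E[OF assms(1)] by blast
  obtain d where d: "\<And>n z a. \<forall>i<n. z i \<in> ball 0 1 \<Longrightarrow>
      (cmod (\<Sum>i<n. cnj (a i) * g (z i)))\<^sup>2 \<le> d * Re (kernel_form n z a)"
    using in_H2E[OF assms(2)] by blast
  show ?thesis
  proof (rule in_H2I[where c = "2 * c + 2 * d"])
    fix n and z :: "nat \<Rightarrow> complex^'d" and a assume z: "\<forall>i<n. z i \<in> ball 0 1"
    let ?x = "\<Sum>i<n. cnj (a i) * f (z i)" and ?y = "\<Sum>i<n. cnj (a i) * g (z i)"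
    have "(cmod (\<Sum>i<n. cnj (a i) * (f (z i) + g (z i))))\<^sup>2 = (cmod (?x + ?y))\<^sup>2"
      by (simp add: distrib_left sum.distrib)
    also have "\<dots> \<le> (cmod ?x + cmod ?y)\<^sup>2"
      by (simp add: norm_triangle_ineq power_mono)
    also have "\<dots> \<le> 2 * (cmod ?x)\<^sup>2 + 2 * (cmod ?y)\<^sup>2"
      using zero_le_power2[of "cmod ?x - cmod ?y"] by (simp add: power2_eq_square algebra_simps)
    also have "\<dots> \<le> (2 * c + 2 * d) * Re (kernel_form n z a)"
      using c[OF z, of a] d[OF z, of a] by (simp add: algebra_simps)
    finally show "(cmod (\<Sum>i<n. cnj (a i) * (f (z i) + g (z i))))\<^sup>2 \<le> (2 * c + 2 * d) * Re (kernel_form n z a)" .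
  qed
qed

lemma in_H2_scale:
  fixes f :: "complex^'d \<Rightarrow> complex"
  assumes "in_H2 f"
  shows "in_H2 (\<lambda>x. s * f x)"
proof -
  obtain c where c: "\<And>n z a. \<forall>i<n. z i \<in> ball 0 1 \<Longrightarrow>
      (cmod (\<Sum>i<n. cnj (a i) * f (z i)))\<^sup>2 \<le> c * Re (kernel_form n z a)"
    using in_H2E[OF assms] by blast
  show ?thesis
  proof (rule in_H2I[where c = "(cmod s)\<^sup>2 * c"])
    fix n and z :: "nat \<Rightarrow> complex^'d" and a assume z: "\<forall>i<n. z i \<in> ball 0 1"
    have "(\<Sum>i<n. cnj (a i) * (s * f (z i))) = s * (\<Sum>i<n. cnj (a i) * f (z i))"
      by (simp add: sum_distrib_left mult_ac)
    moreover have "(cmod s)\<^sup>2 * (cmod (\<Sum>i<n. cnj (a i) * f (z i)))\<^sup>2 \<le> (cmod s)\<^sup>2 * (c * Re (kernel_form n z a))"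
      using c[OF z, of a] by (simp add: mult_left_mono)
    ultimately show "(cmod (\<Sum>i<n. cnj (a i) * (s * f (z i))))\<^sup>2 \<le> (cmod s)\<^sup>2 * c * Re (kernel_form n z a)"
      by (simp add: norm_mult power_mult_distrib mult_ac)
  qed
qed

lemma is_multiplierD: "is_multiplier \<phi> \<Longrightarrow> in_H2 f \<Longrightarrow> in_H2 (\<lambda>z. \<phi> z * f z)"
  unfolding is_multiplier_def by blast

lemma is_multiplier_const: "is_multiplier (\<lambda>x::complex^'d. c)"
  unfolding is_multiplier_def by (auto intro: in_H2_scale)

lemma is_multiplier_coordinate: "is_multiplier (\<lambda>x::complex^'d. x $ k)"
  unfolding is_multiplier_def by (auto intro: in_H2_coordinate_mult)

lemma is_multiplier_add:
  fixes \<phi> \<psi> :: "complex^'d \<Rightarrow> complex"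
  assumes "is_multiplier \<phi>" "is_multiplier \<psi>"
  shows "is_multiplier (\<lambda>x. \<phi> x + \<psi> x)"
  unfolding is_multiplier_def
proof (intro allI impI)
  fix f :: "complex^'d \<Rightarrow> complex" assume f: "in_H2 f"
  have "in_H2 (\<lambda>z. \<phi> z * f z + \<psi> z * f z)"
    using assms[THEN is_multiplierD, OF f] by (rule in_H2_add)
  then show "in_H2 (\<lambda>z. (\<phi> z + \<psi> z) * f z)" by (simp add: distrib_right)
qed

lemma is_multiplier_mult:
  fixes \<phi> \<psi> :: "complex^'d \<Rightarrow> complex"
  assumes "is_multiplier \<phi>" "is_multiplier \<psi>"
  shows "is_multiplier (\<lambda>x. \<phi> x * \<psi> x)"
  unfolding is_multiplier_def
proof (intro allI impI)
  fix f :: "complex^'d \<Rightarrow> complex" assume f: "in_H2 f"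
  have "in_H2 (\<lambda>z. \<phi> z * (\<psi> z * f z))"
    by (intro is_multiplierD assms f)
  then show "in_H2 (\<lambda>z. \<phi> z * \<psi> z * f z)" by (simp add: mult.assoc)
qed

lemma is_multiplier_sum:
  fixes F :: "'k \<Rightarrow> complex^'d \<Rightarrow> complex"
  assumes "\<And>k. k \<in> A \<Longrightarrow> is_multiplier (F k)"
  shows "is_multiplier (\<lambda>x. \<Sum>k\<in>A. F k x)"
  using assms
proof (induction A rule: infinite_finite_induct)
  case (insert k A)
  then show ?case using is_multiplier_add[of "F k"] by simp
qed (simp_all add: is_multiplier_const)

lemma is_multiplier_in_H2: "is_multiplier (\<psi> :: complex^'d \<Rightarrow> complex) \<Longrightarrow> in_H2 \<psi>"
  using is_multiplierD[OF _ in_H2_const] by simp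

lemma is_multiplier_diff:
  fixes \<phi> \<psi> :: "complex^'d \<Rightarrow> complex"
  assumes "is_multiplier \<phi>" "is_multiplier \<psi>"
  shows "is_multiplier (\<lambda>x. \<phi> x - \<psi> x)"
  using is_multiplier_add[OF assms(1) is_multiplier_mult[OF is_multiplier_const[of "-1"] assms(2)]]
  by simp

lemma da_kernel_tendsto:
  fixes x y :: "nat \<Rightarrow> complex^'d"
  assumes "x \<longlonglongrightarrow> u" "y \<longlonglongrightarrow> v" "u \<in> ball 0 1" "v \<in> ball 0 1"
  shows "(\<lambda>n. da_kernel (x n) (y n)) \<longlonglongrightarrow> da_kernel u v"
proof -
  have "(\<lambda>n. da_inner (x n) (y n)) \<longlonglongrightarrow> da_inner u v"
    unfolding da_inner_def by (intro tendsto_intros assms)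
  moreover have "1 - da_inner u v \<noteq> 0"
    using norm_da_inner_less_1[OF assms(3,4)] by auto
  ultimately show ?thesis
    unfolding da_kernel_def by (intro tendsto_intros) auto
qed

(* Testing the defining inequality of H^2_d against k_t - k_w bounds |f t - f w|^2 by a multiple
   of the squared norm D t of k_t - k_w, which tends to 0 as t tends to w. *)

lemma in_H2_tendsto:
  fixes f :: "complex^'d \<Rightarrow> complex"
  assumes "in_H2 f" "w \<in> ball 0 1" "t \<longlonglongrightarrow> w" "\<And>n. t n \<in> ball 0 1"
  shows "(\<lambda>n. f (t n)) \<longlonglongrightarrow> f w"
proof -
  obtain c where c: "\<And>n z a. \<forall>i<n. z i \<in> ball 0 1 \<Longrightarrow>
      (cmod (\<Sum>i<n. cnj (a i) * f (z i)))\<^sup>2 \<le> c * Re (kernel_form n z a)"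
    using in_H2E[OF assms(1)] by blast
  define D where "D z = da_kernel z z - da_kernel w z - da_kernel z w + da_kernel w w" for z
  have bound: "norm (f (t n) - f w) \<le> sqrt (c * Re (D (t n)))" for n
  proof (rule real_le_rsqrt)
    let ?z = "\<lambda>i::nat. if i = 0 then t n else w" and ?a = "\<lambda>i::nat. if i = 0 then 1 else -1"
    have z: "\<forall>i<2. ?z i \<in> ball 0 1"
      using assms(2,4) by simp
    have sum: "(\<Sum>i<2. cnj (?a i) * f (?z i)) = f (t n) - f w"
      by (simp add: numeral_2_eq_2)
    have form: "kernel_form 2 ?z ?a = D (t n)"
      by (simp add: kernel_form_def D_def numeral_2_eq_2)
    show "(norm (f (t n) - f w))\<^sup>2 \<le> c * Re (D (t n))"
      using c[OF z, of ?a] unfolding sum form .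
  qed
  have "(\<lambda>n. D (t n)) \<longlonglongrightarrow> D w"
    unfolding D_def by (intro tendsto_intros da_kernel_tendsto assms(2,3,4))
  then have "(\<lambda>n. sqrt (c * Re (D (t n)))) \<longlonglongrightarrow> sqrt (c * Re (D w))"
    by (intro tendsto_intros)
  then have "(\<lambda>n. sqrt (c * Re (D (t n)))) \<longlonglongrightarrow> 0"
    by (simp add: D_def)
  then have "(\<lambda>n. f (t n) - f w) \<longlonglongrightarrow> 0"
    by (rule Lim_null_comparison[rotated]) (simp add: bound always_eventually)
  then show ?thesis by (rule LIM_zero_cancel)
qed

lemma in_H2_continuous_on: "in_H2 f \<Longrightarrow> continuous_on (ball 0 1) f"
  by (intro continuous_on_sequentiallyI in_H2_tendsto) auto

lemma interpolating_seq_not_islimpt: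
  assumes "interpolating_seq \<Lambda>" "w \<in> ball 0 1"
  shows "\<not> w islimpt \<Lambda>"
proof
  assume "w islimpt \<Lambda>"
  then obtain s where s: "\<And>n. s n \<in> \<Lambda> - {w}" "inj s" "s \<longlonglongrightarrow> w"
    unfolding limpt_sequential_inj by blast
  have \<Lambda>: "\<Lambda> \<subseteq> ball 0 1"
    "\<And>a. bounded (a ` \<Lambda>) \<Longrightarrow> \<exists>\<psi>. is_multiplier \<psi> \<and> (\<forall>x\<in>\<Lambda>. \<psi> x = a x)"
    using assms(1) unfolding interpolating_seq_def by blast+
  define a where "a x = (if x \<in> s ` {n. even n} then 1 else 0 :: complex)" for x
  have "bounded (a ` \<Lambda>)"
    by (rule bounded_subset[of "{0, 1}"]) (auto simp: a_def)
  then obtain \<psi> where \<psi>: "is_multiplier \<psi>" "\<And>x. x \<in> \<Lambda> \<Longrightarrow> \<psi> x = a x"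
    using \<Lambda>(2) by blast
  have alternating: "\<psi> (s n) = (if even n then 1 else 0)" for n
    using \<psi>(2)[of "s n"] s(1)[of n] inj_image_mem_iff[OF s(2)] by (simp add: a_def)
  have "s n \<in> ball 0 1" for n
    using s(1) \<Lambda>(1) by blast
  then have "(\<lambda>n. \<psi> (s n)) \<longlonglongrightarrow> \<psi> w"
    by (intro continuous_on_tendsto_compose[OF in_H2_continuous_on[OF is_multiplier_in_H2[OF \<psi>(1)]] s(3) assms(2)])
      (simp add: always_eventually)
  from LIMSEQ_subseq_LIMSEQ[OF this, of "\<lambda>n. 2 * n"] LIMSEQ_subseq_LIMSEQ[OF this, of "\<lambda>n. 2 * n + 1"]
  have "(\<lambda>n. 1) \<longlonglongrightarrow> \<psi> w" "(\<lambda>n. 0) \<longlonglongrightarrow> \<psi> w"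
    by (simp_all add: strict_mono_def alternating o_def)
  then show False by (simp add: LIMSEQ_const_iff)
qed

lemma interpolating_seq_separated:
  assumes "interpolating_seq \<Lambda>" "w \<in> ball 0 1" "w \<notin> \<Lambda>"
  obtains \<delta> where "\<delta> > 0" "\<And>x. x \<in> \<Lambda> \<Longrightarrow> \<delta> \<le> norm (x - w)"
proof -
  obtain \<delta> where "\<delta> > 0" "\<And>x. x \<in> \<Lambda> \<Longrightarrow> x \<noteq> w \<Longrightarrow> \<not> dist x w < \<delta>"
    using interpolating_seq_not_islimpt[OF assms(1,2)] unfolding islimpt_approachable by blast
  with assms(3) show thesis
    by (intro that[of \<delta>]) (auto simp: dist_norm not_less)
qed

lemma sum_component_mult_cnj: "(\<Sum>k\<in>UNIV. v $ k * cnj (v $ k)) = of_real ((norm (v :: complex^'d))\<^sup>2)"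
proof -
  have "(\<Sum>k\<in>UNIV. v $ k * cnj (v $ k)) = of_real (\<Sum>k\<in>UNIV. (cmod (v $ k))\<^sup>2)"
    by (simp only: of_real_sum complex_norm_square)
  also have "\<dots> = of_real ((norm v)\<^sup>2)"
    unfolding norm_vec_def L2_set_def by (simp add: sum_nonneg)
  finally show ?thesis .
qed

lemma bounded_cnj_component_div_norm_square:
  fixes w :: "complex^'d"
  assumes "\<delta> > 0" "\<And>x. x \<in> S \<Longrightarrow> \<delta> \<le> norm (x - w)"
  shows "bounded ((\<lambda>x. cnj ((x - w) $ k) / of_real ((norm (x - w))\<^sup>2)) ` S)"
  unfolding bounded_iff
proof (intro exI[of _ "1 / \<delta>"] ballI, clarify)
  fix x assume "x \<in> S"
  then have \<delta>: "\<delta> \<le> norm (x - w)" using assms(2) by blast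
  have "cmod (cnj ((x - w) $ k) / of_real ((norm (x - w))\<^sup>2)) = cmod ((x - w) $ k) / (norm (x - w))\<^sup>2"
    by (simp add: norm_divide norm_power del: vector_minus_component)
  also have "\<dots> \<le> norm (x - w) / (norm (x - w))\<^sup>2"
    by (rule divide_right_mono[OF Finite_Cartesian_Product.norm_nth_le]) simp
  also have "\<dots> = 1 / norm (x - w)"
    by (simp add: power2_eq_square)
  also have "\<dots> \<le> 1 / \<delta>"
    using \<delta> assms(1) by (simp add: frac_le)
  finally show "cmod (cnj ((x - w) $ k) / of_real ((norm (x - w))\<^sup>2)) \<le> 1 / \<delta>" .
qed

lemma interpolating_seq_peak_multiplier:
  assumes "interpolating_seq \<Lambda>" "w \<in> ball 0 1" "w \<notin> \<Lambda>"
  obtains \<phi> where "is_multiplier \<phi>" "\<phi> w = 1" "\<And>x. x \<in> \<Lambda> \<Longrightarrow> \<phi> x = 0"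
proof -
  obtain \<delta> where \<delta>: "\<delta> > 0" "\<And>x. x \<in> \<Lambda> \<Longrightarrow> \<delta> \<le> norm (x - w)"
    using interpolating_seq_separated[OF assms] by blast
  define b where "b k x = cnj ((x - w) $ k) / of_real ((norm (x - w))\<^sup>2)" for k x
  have "\<exists>h. is_multiplier h \<and> (\<forall>x\<in>\<Lambda>. h x = b k x)" for k
    using assms(1) bounded_cnj_component_div_norm_square[OF \<delta>]
    unfolding interpolating_seq_def b_def by blast
  then obtain h where h: "\<And>k. is_multiplier (h k)" "\<And>k x. x \<in> \<Lambda> \<Longrightarrow> h k x = b k x"
    by metis
  define \<phi> where "\<phi> x = 1 - (\<Sum>k\<in>UNIV. (x $ k - w $ k) * h k x)" for x
  show thesis
  proof (rule that)
    show "is_multiplier \<phi>"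
      unfolding \<phi>_def
      by (intro is_multiplier_diff is_multiplier_const is_multiplier_sum is_multiplier_mult
          is_multiplier_coordinate h)
    show "\<phi> w = 1"
      by (simp add: \<phi>_def)
    fix x assume x: "x \<in> \<Lambda>"
    have "(\<Sum>k\<in>UNIV. (x $ k - w $ k) * h k x)
        = (\<Sum>k\<in>UNIV. (x - w) $ k * cnj ((x - w) $ k)) / of_real ((norm (x - w))\<^sup>2)"
      by (simp add: h(2)[OF x] b_def sum_divide_distrib)
    also have "\<dots> = 1"
      using x assms(3) by (auto simp: sum_component_mult_cnj simp del: vector_minus_component)
    finally show "\<phi> x = 0"
      by (simp add: \<phi>_def)
  qed
qed

theorem corollary2p4:
  fixes \<Lambda> :: "(complex^'d) set" and w :: "complex^'d"
  assumes "interpolating_seq \<Lambda>"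
    and "w \<in> ball 0 1"
  shows "interpolating_seq (insert w \<Lambda>)"
proof (cases "w \<in> \<Lambda>")
  case True
  then show ?thesis using assms(1) by (simp add: insert_absorb)
next
  case False
  obtain \<phi> where \<phi>: "is_multiplier \<phi>" "\<phi> w = 1" "\<And>x. x \<in> \<Lambda> \<Longrightarrow> \<phi> x = 0"
    using interpolating_seq_peak_multiplier[OF assms False] by blast
  have "\<exists>\<psi>'. is_multiplier \<psi>' \<and> (\<forall>x\<in>insert w \<Lambda>. \<psi>' x = a x)"
    if "bounded (a ` insert w \<Lambda>)" for a :: "complex^'d \<Rightarrow> complex"
  proof -
    have "bounded (a ` \<Lambda>)"
      using that by (rule bounded_subset) auto
    then obtain \<psi> where \<psi>: "is_multiplier \<psi>" "\<forall>x\<in>\<Lambda>. \<psi> x = a x"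
      using assms(1) unfolding interpolating_seq_def by blast
    have "is_multiplier (\<lambda>x. \<psi> x + (a w - \<psi> w) * \<phi> x)"
      by (intro is_multiplier_add is_multiplier_mult is_multiplier_const \<psi>(1) \<phi>(1))
    moreover have "\<forall>x\<in>insert w \<Lambda>. \<psi> x + (a w - \<psi> w) * \<phi> x = a x"
      using \<psi>(2) \<phi>(2,3) by simp
    ultimately show ?thesis by blast
  qed
  then show ?thesis
    using assms unfolding interpolating_seq_def by simp
qed

end
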